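(* For integers $1\le N\le 50$, a $PCS_3^N$ exists if and only if $N\in\{1,4,8,12,16,24,28,32,36,40,44,48\}$.
   Context: A binary sequence of length $N$ is a sequence $a=(a(0),\dots,a(N-1))$ with each $a(i)\in\{+1,-1\}$. Its periodic autocorrelation function is $\tilde\varphi_a(i)=\sum_{j=0}^{N-1}a(j)a(i+j \bmod N)$ for $0\le i<N$. A family $a_1,\dots,a_p$ of binary sequences, all of length $N$, is a $PCS_p^N$ (periodic complementary set) if $\sum_{k=1}^p\tilde\varphi_{a_k}(i)=0$ for all $0<i<N$. The sequences in a family need not be distinct. *)

theory Defs
  imports Main
begin

text \<open>A binary sequence of length N is represented as a function nat => int;
  only the values at indices 0..N-1 matter.\<close>

definition binary_seq :: "nat \<Rightarrow> (nat \<Rightarrow> int) \<Rightarrow> bool" where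
  "binary_seq N a \<longleftrightarrow> (\<forall>j<N. a j = 1 \<or> a j = -1)"

definition pacf :: "nat \<Rightarrow> (nat \<Rightarrow> int) \<Rightarrow> nat \<Rightarrow> int" where
  "pacf N a i = (\<Sum>j<N. a j * a ((i + j) mod N))"

text \<open>A family a_1..a_p is indexed here by k in {0..<p}.\<close>
definition is_PCS :: "nat \<Rightarrow> nat \<Rightarrow> (nat \<Rightarrow> nat \<Rightarrow> int) \<Rightarrow> bool" where
  "is_PCS p N as \<longleftrightarrow> (\<forall>k<p. binary_seq N (as k)) \<and>
     (\<forall>i. 0 < i \<and> i < N \<longrightarrow> (\<Sum>k<p. pacf N (as k) i) = 0)"

definition PCS_exists :: "nat \<Rightarrow> nat \<Rightarrow> bool" where
  "PCS_exists p N \<longleftrightarrow> (\<exists>as. is_PCS p N as)"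

end

theory Submission
  imports Defs
begin

(* Proof plan.  Let a_1..a_p be a PCS_p^N with row sums s_k = sum_j a_k(j).

   Necessity rests on two elementary invariants of a single +-1 sequence a:
   (1) every autocorrelation value is congruent to N modulo 4, because
       (1 - a(j)) (1 - a(i+j)) is 0 or 4 and sum_j a(j) = N modulo 2;
   (2) summing the autocorrelation over all shifts gives (sum_j a(j))^2.
   Applying (1) at shift 1 to a PCS gives 4 | p N, and (2) gives
   s_1^2 + ... + s_p^2 = p N; for even N all s_k are even, so 3N/4 is a sum of
   three squares when p = 3.  For p = 3 this leaves N = 1 or 4 | N, and N = 20 is
   excluded since 15 = 7 mod 8 is not a sum of three squares.

   Sufficiency is by explicit families: a list-based checker whose soundness is
   proved once, and a table of witnesses verified by evaluation. *)

lemma sum_cyclic_shift: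
  fixes f :: "nat \<Rightarrow> 'a::comm_monoid_add"
  assumes "0 < N"
  shows "(\<Sum>j<N. f ((i + j) mod N)) = (\<Sum>j<N. f j)"
proof -
  have cancel: "(i + k + (N - i mod N)) mod N = k mod N" for k
  proof -
    have "i mod N < N" using assms by simp
    moreover have "i = N * (i div N) + i mod N" by simp
    ultimately have "i + k + (N - i mod N) = k + N * (i div N) + N"
      by linarith
    also have "(k + N * (i div N) + N) mod N = k mod N" by simp
    finally show ?thesis .
  qed
  show ?thesis
  proof (rule sum.reindex_bij_witness[where i = "\<lambda>j. (j + (N - i mod N)) mod N"
                                        and j = "\<lambda>j. (i + j) mod N"])
    fix j assume "j \<in> {..<N}"
    then have j: "j mod N = j" by simp
    show "((i + j) mod N + (N - i mod N)) mod N = j"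
      using cancel[of j] j by (simp add: mod_add_left_eq)
    show "(i + (j + (N - i mod N)) mod N) mod N = j"
      using cancel[of j] j by (simp add: mod_add_right_eq add.assoc)
  qed (use assms in auto)
qed

section \<open>Invariants of a single binary sequence\<close>

lemma binary_seq_sum_parity:
  assumes "binary_seq N a"
  shows "2 dvd (int N - (\<Sum>j<N. a j))"
proof -
  have "int N - (\<Sum>j<N. a j) = (\<Sum>j<N. 1 - a j)" by (simp add: sum_subtractf)
  moreover have "2 dvd (\<Sum>j<N. 1 - a j)"
    using assms unfolding binary_seq_def by (intro dvd_sum) auto
  ultimately show ?thesis by simp
qed

lemma pacf_zero:
  assumes "binary_seq N a"
  shows "pacf N a 0 = int N"
proof -
  have "pacf N a 0 = (\<Sum>j<N. 1)"
    unfolding pacf_def using assms unfolding binary_seq_def by (intro sum.cong) auto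
  then show ?thesis by simp
qed

text \<open>Every autocorrelation value of a binary sequence is congruent to its
  length modulo 4: each product (1 - a j) (1 - a (i + j)) is 0 or 4, and expanding
  their sum leaves the autocorrelation, the length and twice the sum of a.\<close>

lemma pacf_congruent_length:
  assumes b: "binary_seq N a" and N: "0 < N"
  shows "4 dvd (pacf N a i - int N)"
proof -
  define s where "s = (\<Sum>j<N. a j)"
  have products: "4 dvd (\<Sum>j<N. (1 - a j) * (1 - a ((i + j) mod N)))"
  proof (intro dvd_sum)
    fix j assume "j \<in> {..<N}"
    then have "a j \<in> {1, -1}" "a ((i + j) mod N) \<in> {1, -1}"
      using b N unfolding binary_seq_def by auto
    then show "4 dvd (1 - a j) * (1 - a ((i + j) mod N))" by auto
  qed
  have "(\<Sum>j<N. (1 - a j) * (1 - a ((i + j) mod N)))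
      = int N - s - (\<Sum>j<N. a ((i + j) mod N)) + pacf N a i"
    unfolding pacf_def s_def by (simp add: algebra_simps sum.distrib sum_subtractf)
  also have "(\<Sum>j<N. a ((i + j) mod N)) = s"
    unfolding s_def by (rule sum_cyclic_shift[OF N])
  finally have expand: "(\<Sum>j<N. (1 - a j) * (1 - a ((i + j) mod N)))
      = pacf N a i - int N + 2 * (int N - s)" by simp
  obtain m where "int N - s = 2 * m"
    using binary_seq_sum_parity[OF b] unfolding s_def by (rule dvdE)
  then have twice: "4 dvd 2 * (int N - s)" by simp
  have decompose: "pacf N a i - int N
      = (\<Sum>j<N. (1 - a j) * (1 - a ((i + j) mod N))) - 2 * (int N - s)"
    using expand by simp
  show ?thesis unfolding decompose using products twice by (rule dvd_diff)
qed

lemma sum_pacf_square: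
  assumes N: "0 < N"
  shows "(\<Sum>i<N. pacf N a i) = (\<Sum>j<N. a j)\<^sup>2"
proof -
  have "(\<Sum>i<N. pacf N a i) = (\<Sum>j<N. a j * (\<Sum>i<N. a ((j + i) mod N)))"
    unfolding pacf_def by (subst sum.swap) (simp add: sum_distrib_left add.commute)
  also have "\<dots> = (\<Sum>j<N. a j * (\<Sum>i<N. a i))"
    using sum_cyclic_shift[OF N, of a] by simp
  finally show ?thesis by (simp add: power2_eq_square sum_distrib_right)
qed

section \<open>Necessary conditions for periodic complementary sets\<close>

text \<open>Comparing the shift-1 condition with the congruence above: p N is
  divisible by 4 for every PCS_p^N with N at least 2.\<close>

lemma PCS_length_divisibility:
  assumes P: "is_PCS p N as" and N: "2 \<le> N"
  shows "4 dvd p * N"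
proof -
  have b: "binary_seq N (as k)" if "k < p" for k
    using P that unfolding is_PCS_def by blast
  have "(\<Sum>k<p. pacf N (as k) 1) = 0"
    using P N unfolding is_PCS_def by simp
  then have "int p * int N = - (\<Sum>k<p. pacf N (as k) 1 - int N)"
    by (simp add: sum_subtractf)
  moreover have "4 dvd (\<Sum>k<p. pacf N (as k) 1 - int N)"
    using pacf_congruent_length[OF b] N by (intro dvd_sum) simp
  ultimately have "(4::int) dvd int (p * N)" by simp
  then show ?thesis by presburger
qed

text \<open>Summing the defining condition over all shifts: the squares of the row
  sums of a PCS_p^N add up to p N.\<close>

lemma PCS_row_sums_squares:
  assumes P: "is_PCS p N as" and N: "0 < N"
  shows "(\<Sum>k<p. (\<Sum>j<N. as k j)\<^sup>2) = int p * int N"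
proof -
  obtain M where M: "N = Suc M" using N by (cases N) auto
  have b: "binary_seq N (as k)" if "k < p" for k
    using P that unfolding is_PCS_def by blast
  have "(\<Sum>k<p. (\<Sum>j<N. as k j)\<^sup>2) = (\<Sum>i<N. \<Sum>k<p. pacf N (as k) i)"
    by (subst sum.swap) (simp add: sum_pacf_square[OF N])
  also have "\<dots> = (\<Sum>k<p. pacf N (as k) 0) + (\<Sum>i<M. \<Sum>k<p. pacf N (as k) (Suc i))"
    unfolding M by (rule sum.lessThan_Suc_shift)
  also have "(\<Sum>i<M. \<Sum>k<p. pacf N (as k) (Suc i)) = 0"
    using P M unfolding is_PCS_def by (intro sum.neutral) auto
  also have "(\<Sum>k<p. pacf N (as k) 0) = (\<Sum>k<p. int N)"
    using pacf_zero[OF b] by (intro sum.cong) auto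
  finally show ?thesis by simp
qed

text \<open>For even N every row sum is even, so p N is four times a sum of p squares.\<close>

lemma PCS_even_length_squares:
  assumes P: "is_PCS p N as" and N: "0 < N" "even N"
  obtains t where "int p * int N = 4 * (\<Sum>k<p. (t k)\<^sup>2)"
proof -
  define s where "s k = (\<Sum>j<N. as k j)" for k
  have even_sum: "even (s k)" if "k < p" for k
  proof -
    have "2 dvd (int N - s k)"
      using P that binary_seq_sum_parity unfolding is_PCS_def s_def by blast
    with N(2) show ?thesis by (simp add: dvd_diff_commute dvd_add_right_iff)
  qed
  have "(s k)\<^sup>2 = 4 * (s k div 2)\<^sup>2" if k: "k < p" for k
  proof -
    obtain m where "s k = 2 * m" using even_sum[OF k] by (rule evenE)
    then show ?thesis by (simp add: power_mult_distrib)
  qed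
  then have "(\<Sum>k<p. (s k)\<^sup>2) = 4 * (\<Sum>k<p. (s k div 2)\<^sup>2)"
    by (simp add: sum_distrib_left)
  with PCS_row_sums_squares[OF P N(1)] show ?thesis
    using that unfolding s_def by metis
qed

lemma square_mod_8: "(x::int)\<^sup>2 mod 8 \<in> {0, 1, 4}"
proof -
  have "x mod 8 \<in> {0..7}" by simp
  then have "x mod 8 \<in> {0, 1, 2, 3, 4, 5, 6, 7}" by auto
  then have "(x mod 8)\<^sup>2 mod 8 \<in> {0, 1, 4}" by auto
  then show ?thesis by (simp add: power_mod)
qed

lemma three_squares_mod_8: "((x::int)\<^sup>2 + y\<^sup>2 + z\<^sup>2) mod 8 \<noteq> 7"
proof -
  have "(x\<^sup>2 + y\<^sup>2 + z\<^sup>2) mod 8 = (x\<^sup>2 mod 8 + y\<^sup>2 mod 8 + z\<^sup>2 mod 8) mod 8"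
    by (metis mod_add_eq mod_add_left_eq)
  then show ?thesis using square_mod_8[of x] square_mod_8[of y] square_mod_8[of z] by auto
qed

text \<open>There is no PCS_3^20: it would make 60/4 = 15 a sum of three squares.\<close>

lemma no_PCS3_length_20: "\<not> is_PCS 3 20 as"
proof
  assume P: "is_PCS 3 20 as"
  obtain t :: "nat \<Rightarrow> int" where "int 3 * int 20 = 4 * (\<Sum>k<3. (t k)\<^sup>2)"
    using PCS_even_length_squares[OF P] by auto
  then have "(t 0)\<^sup>2 + (t 1)\<^sup>2 + (t 2)\<^sup>2 = 15" by (simp add: eval_nat_numeral)
  then have "((t 0)\<^sup>2 + (t 1)\<^sup>2 + (t 2)\<^sup>2) mod 8 = 7" by simp
  with three_squares_mod_8 show False by blast
qed

section \<open>Checking complementary sets given as lists\<close>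

text \<open>The periodic autocorrelation of a finite sequence given as a list: the
  inner product of the list with its cyclic rotation by i, written with drop and
  take so that it evaluates efficiently.\<close>

definition cyclic_corr :: "int list \<Rightarrow> nat \<Rightarrow> int" where
  "cyclic_corr l i =
     (let r = i mod length l in sum_list (map2 (*) l (drop r l @ take r l)))"

lemma cyclic_corr_pacf: "cyclic_corr l i = pacf (length l) (\<lambda>j. l ! j) i"
proof -
  have "cyclic_corr l i = sum_list (map2 (*) l (rotate i l))"
    unfolding cyclic_corr_def Let_def by (simp add: rotate_drop_take)
  also have "\<dots> = (\<Sum>j<length l. l ! j * rotate i l ! j)"
    by (simp add: sum_list_sum_nth atLeast0LessThan)
  also have "\<dots> = (\<Sum>j<length l. l ! j * l ! ((i + j) mod length l))"
    by (intro sum.cong) (auto simp: nth_rotate add.commute)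
  finally show ?thesis unfolding pacf_def .
qed

definition list_PCS :: "nat \<Rightarrow> int list list \<Rightarrow> bool" where
  "list_PCS N ls \<longleftrightarrow>
     list_all (\<lambda>l. length l = N \<and> list_all (\<lambda>v. v = 1 \<or> v = -1) l) ls \<and>
     list_all (\<lambda>i. sum_list (map (\<lambda>l. cyclic_corr l i) ls) = 0) [1..<N]"

lemma list_PCS_sound:
  assumes "list_PCS N ls"
  shows "PCS_exists (length ls) N"
proof -
  define as where "as k j = ls ! k ! j" for k j
  have len: "length (ls ! k) = N" if "k < length ls" for k
    using assms that unfolding list_PCS_def list_all_iff by auto
  have bin: "binary_seq N (as k)" if "k < length ls" for k
    using assms that len[OF that] unfolding list_PCS_def list_all_iff binary_seq_def as_def
    by (metis nth_mem)
  have "(\<Sum>k<length ls. pacf N (as k) i) = 0" if "0 < i" "i < N" for i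
  proof -
    have "(\<Sum>k<length ls. pacf N (as k) i) = (\<Sum>k<length ls. cyclic_corr (ls ! k) i)"
      using len by (intro sum.cong) (simp_all add: cyclic_corr_pacf as_def[abs_def])
    also have "\<dots> = sum_list (map (\<lambda>l. cyclic_corr l i) ls)"
      by (simp add: sum_list_sum_nth atLeast0LessThan)
    also have "\<dots> = 0"
      using assms that unfolding list_PCS_def list_all_iff by auto
    finally show ?thesis .
  qed
  with bin show ?thesis unfolding PCS_exists_def is_PCS_def by blast
qed

definition PCS3_table :: "(nat \<times> int list list) list" where
  "PCS3_table =
    [(1, [[1], [1], [1]]),
     (4, [[-1, -1, 1, -1],
          [-1, 1, -1, -1],
          [1, 1, 1, -1]]),
     (8, [[-1, -1, 1, -1, 1, -1, -1, -1],
          [-1, -1, 1, -1, 1, 1, 1, 1],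
          [-1, 1, 1, -1, -1, 1, -1, -1]]),
     (12, [[-1, -1, 1, -1, -1, -1, -1, 1, -1, 1, 1, -1],
          [1, 1, -1, 1, -1, -1, 1, -1, -1, -1, -1, -1],
          [-1, 1, -1, -1, -1, 1, 1, 1, -1, 1, -1, -1]]),
     (16, [[-1, -1, -1, -1, -1, 1, 1, 1, -1, 1, 1, -1, -1, 1, -1, -1],
          [1, -1, 1, 1, -1, 1, 1, 1, -1, -1, 1, -1, 1, 1, 1, -1],
          [1, 1, -1, 1, 1, -1, 1, -1, 1, 1, 1, -1, -1, -1, 1, 1]]),
     (24, [[1, 1, -1, 1, -1, -1, 1, -1, -1, -1, -1, 1, 1, 1, -1, -1, -1, 1, -1, 1, -1, 1, 1, 1],
          [-1, -1, 1, -1, 1, 1, -1, 1, 1, -1, -1, -1, 1, -1, -1, -1, -1, -1, -1, 1, -1, 1, 1, -1],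
          [-1, 1, -1, 1, 1, 1, -1, -1, -1, 1, 1, -1, 1, 1, 1, -1, 1, 1, 1, 1, -1, 1, 1, -1]]),
     (28, [[1, -1, -1, 1, -1, 1, 1, 1, 1, -1, -1, -1, 1, -1, 1, -1, 1, -1, -1, 1, 1, -1, 1, -1, 1, 1, 1, 1],
          [-1, -1, -1, 1, 1, -1, -1, 1, 1, -1, 1, 1, -1, 1, 1, 1, -1, 1, -1, 1, 1, 1, 1, -1, -1, -1, 1, -1],
          [1, 1, -1, 1, -1, -1, -1, -1, -1, -1, 1, 1, -1, 1, 1, 1, -1, -1, 1, -1, -1, -1, -1, 1, -1, -1, -1, -1]]),
     (32, [[1, 1, 1, 1, 1, 1, -1, 1, -1, 1, -1, 1, -1, -1, -1, 1, -1, 1, 1, -1, -1, 1, 1, 1, 1, -1, 1, 1, 1, 1, -1, -1],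
          [1, 1, 1, -1, -1, -1, -1, -1, 1, 1, 1, 1, 1, -1, 1, 1, -1, 1, 1, 1, -1, -1, 1, -1, -1, 1, -1, -1, 1, -1, 1, 1],
          [-1, -1, -1, 1, -1, 1, -1, 1, 1, -1, 1, -1, 1, 1, 1, 1, -1, 1, 1, 1, -1, -1, 1, 1, -1, 1, 1, -1, -1, -1, 1, 1]]),
     (36, [[1, -1, 1, -1, -1, -1, -1, -1, 1, -1, -1, -1, -1, 1, -1, -1, 1, 1, 1, -1, 1, 1, -1, -1, -1, -1, -1, -1, 1, -1, 1, -1, 1, -1, -1, 1],
          [-1, 1, -1, 1, -1, -1, -1, -1, 1, 1, -1, -1, -1, -1, 1, -1, -1, 1, -1, -1, 1, 1, -1, -1, -1, 1, 1, 1, 1, 1, 1, -1, 1, -1, 1, 1],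
          [1, 1, -1, 1, -1, -1, -1, -1, -1, 1, 1, -1, 1, -1, 1, 1, 1, -1, -1, -1, 1, 1, 1, 1, -1, 1, 1, -1, -1, 1, 1, -1, -1, 1, -1, 1]]),
     (40, [[-1, -1, 1, -1, -1, -1, -1, -1, 1, 1, 1, -1, 1, -1, -1, 1, 1, -1, 1, -1, 1, -1, 1, 1, -1, 1, -1, 1, -1, -1, 1, 1, 1, -1, 1, 1, 1, 1, 1, -1],
          [1, -1, 1, -1, -1, -1, 1, 1, 1, -1, 1, -1, 1, -1, -1, 1, 1, -1, -1, -1, -1, 1, -1, -1, 1, -1, 1, 1, 1, 1, -1, 1, 1, 1, -1, 1, -1, 1, 1, 1],
          [-1, -1, -1, -1, -1, -1, -1, 1, 1, -1, -1, 1, 1, -1, -1, 1, -1, -1, 1, -1, -1, 1, -1, 1, 1, -1, -1, 1, 1, 1, 1, -1, -1, -1, -1, -1, -1, -1, 1, 1]]),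
     (44, [[1, 1, -1, -1, 1, -1, 1, -1, -1, -1, -1, 1, 1, 1, 1, -1, 1, -1, -1, -1, -1, 1, 1, -1, -1, 1, -1, -1, 1, 1, 1, 1, -1, 1, 1, -1, -1, -1, -1, -1, -1, -1, -1, -1],
          [-1, -1, -1, 1, 1, 1, -1, -1, -1, 1, -1, -1, -1, 1, -1, 1, -1, -1, 1, -1, -1, 1, 1, -1, 1, 1, 1, 1, 1, 1, -1, 1, 1, 1, -1, 1, -1, -1, -1, 1, 1, -1, 1, 1],
          [1, 1, 1, -1, 1, -1, 1, -1, -1, -1, 1, 1, -1, 1, 1, -1, -1, 1, -1, 1, -1, -1, 1, 1, 1, 1, -1, 1, -1, 1, 1, -1, 1, -1, 1, -1, 1, 1, 1, 1, -1, -1, 1, 1]]),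
     (48, [[-1, 1, -1, -1, 1, 1, -1, -1, 1, 1, 1, -1, -1, -1, -1, 1, -1, -1, 1, 1, 1, 1, 1, -1, -1, 1, 1, 1, -1, 1, -1, -1, 1, -1, -1, -1, -1, 1, 1, -1, 1, -1, -1, -1, 1, -1, -1, 1],
          [-1, -1, -1, -1, 1, 1, -1, -1, -1, 1, -1, 1, 1, 1, -1, 1, -1, 1, -1, -1, 1, -1, -1, -1, -1, -1, 1, 1, 1, -1, 1, -1, -1, 1, -1, 1, 1, -1, 1, -1, 1, -1, -1, -1, 1, -1, -1, 1],
          [-1, 1, 1, -1, -1, 1, 1, 1, 1, -1, 1, -1, 1, 1, 1, 1, 1, 1, 1, -1, 1, 1, 1, -1, -1, -1, -1, 1, 1, 1, 1, 1, 1, 1, -1, -1, 1, -1, -1, -1, 1, -1, 1, -1, -1, -1, 1, -1]])]"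

lemma PCS3_table_correct: "list_all (\<lambda>(N, ls). length ls = 3 \<and> list_PCS N ls) PCS3_table"
  by code_simp

lemma PCS3_exists_table:
  assumes "N \<in> fst ` set PCS3_table"
  shows "PCS_exists 3 N"
proof -
  obtain ls where "(N, ls) \<in> set PCS3_table" using assms by force
  then have "length ls = 3" "list_PCS N ls"
    using PCS3_table_correct unfolding list_all_iff by auto
  then show ?thesis using list_PCS_sound by metis
qed

theorem proposition3:
  fixes N :: nat
  assumes "1 \<le> N" and "N \<le> 50"
  shows "PCS_exists 3 N \<longleftrightarrow> N \<in> {1,4,8,12,16,24,28,32,36,40,44,48}"
proof
  assume "PCS_exists 3 N"
  then obtain as where P: "is_PCS 3 N as" unfolding PCS_exists_def by blast
  show "N \<in> {1,4,8,12,16,24,28,32,36,40,44,48}"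
  proof (cases "N = 1")
    case False
    then have "4 dvd N"
      using PCS_length_divisibility[OF P] assms(1) by presburger
    moreover have "N \<noteq> 20" using P no_PCS3_length_20 by blast
    ultimately show ?thesis using assms by simp presburger
  qed simp
next
  assume "N \<in> {1,4,8,12,16,24,28,32,36,40,44,48}"
  moreover have "fst ` set PCS3_table = {1,4,8,12,16,24,28,32,36,40,44,48}"
    by (simp add: PCS3_table_def)
  ultimately show "PCS_exists 3 N" using PCS3_exists_table by simp
qed

end
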